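(* Let $\mathscr{C}$ be a graph class containing all trees. Then for every real $\alpha\ge1$, no algorithm is a $0$-uniform $\alpha$-approximation for Minimum Dominating Set on $\mathscr{C}$; that is, there is no map $\mathsf{A}$ assigning to each $G\in\mathscr{C}$ a dominating set $\mathsf{A}(G)$ with $|\mathsf{A}(G)|\le\alpha\,\mathrm{MDS}(G)$ such that $|\mathsf{A}(G)\cap S|\le\alpha\,\mathrm{MDS}(G,S)$ for all $G\in\mathscr{C}$ and $S\subseteq V(G)$.
   Context: $\mathrm{MDS}(G,S)$ is the minimum size of a set $X\subseteq V(G)$ such that every vertex of $S$ is in $X$ or adjacent to a vertex of $X$; $\mathrm{MDS}(G)=\mathrm{MDS}(G,V(G))$. *)

theory Defs
  imports Complex_Main
begin

type_synonym 'a graph = "'a set \<times> ('a \<Rightarrow> 'a \<Rightarrow> bool)"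

definition verts :: "'a graph \<Rightarrow> 'a set" where "verts G = fst G"
definition adj :: "'a graph \<Rightarrow> 'a \<Rightarrow> 'a \<Rightarrow> bool" where "adj G = snd G"

definition is_graph :: "'a graph \<Rightarrow> bool" where
  "is_graph G \<longleftrightarrow> finite (verts G)
     \<and> (\<forall>u v. adj G u v \<longrightarrow> u \<in> verts G \<and> v \<in> verts G)
     \<and> (\<forall>u v. adj G u v \<longrightarrow> adj G v u)
     \<and> (\<forall>v. \<not> adj G v v)"

definition connected_graph :: "'a graph \<Rightarrow> bool" where
  "connected_graph G \<longleftrightarrow> verts G \<noteq> {}
     \<and> (\<forall>u\<in>verts G. \<forall>v\<in>verts G. (adj G)\<^sup>*\<^sup>* u v)"

definition is_cycle :: "'a graph \<Rightarrow> 'a list \<Rightarrow> bool" where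
  "is_cycle G cs \<longleftrightarrow> length cs \<ge> 3 \<and> distinct cs \<and> set cs \<subseteq> verts G
     \<and> (\<forall>i. Suc i < length cs \<longrightarrow> adj G (cs ! i) (cs ! Suc i))
     \<and> adj G (last cs) (hd cs)"

definition acyclic_graph :: "'a graph \<Rightarrow> bool" where
  "acyclic_graph G \<longleftrightarrow> \<not> (\<exists>cs. is_cycle G cs)"

definition is_tree :: "'a graph \<Rightarrow> bool" where
  "is_tree G \<longleftrightarrow> is_graph G \<and> connected_graph G \<and> acyclic_graph G"

definition dominates :: "'a graph \<Rightarrow> 'a set \<Rightarrow> 'a set \<Rightarrow> bool" where
  "dominates G X S \<longleftrightarrow> (\<forall>v\<in>S. v \<in> X \<or> (\<exists>x\<in>X. adj G v x))"

definition MDS :: "'a graph \<Rightarrow> 'a set \<Rightarrow> nat" where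
  "MDS G S = Min {card X | X. X \<subseteq> verts G \<and> dominates G X S}"

end

theory Submission
  imports Defs
begin

text \<open>Take the complete \<open>n\<close>-ary tree of depth two with \<open>n > \<alpha>\<close>. Every vertex dominates its
closed neighbourhood, so a \<open>0\<close>-uniform \<open>\<alpha>\<close>-approximation contains at most \<open>\<alpha>\<close> vertices of
any neighbourhood. A child \<open>i\<close> of the root missing from the solution would force all \<open>n\<close>
leaves below \<open>i\<close> into it; hence all \<open>n\<close> children of the root lie in the solution, too many
for the neighbourhood of the root.\<close>

lemma MDS_le_card:
  assumes "finite (verts G)" "X \<subseteq> verts G" "dominates G X S"
  shows "MDS G S \<le> card X"
proof -
  have "{card X | X. X \<subseteq> verts G \<and> dominates G X S} \<subseteq> card ` Pow (verts G)" by auto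
  then have "finite {card X | X. X \<subseteq> verts G \<and> dominates G X S}"
    using assms(1) finite_subset by blast
  then show ?thesis unfolding MDS_def using assms by (auto intro!: Min_le)
qed

lemma MDS_le_1_if_dominated_by_vertex:
  assumes "finite (verts G)" "v \<in> verts G" "\<forall>u\<in>S. u = v \<or> adj G u v"
  shows "MDS G S \<le> 1"
  using MDS_le_card[of G "{v}" S] assms by (auto simp: dominates_def)

text \<open>The global bound \<open>card X \<le> \<alpha> * MDS G (verts G)\<close> is left out: the argument only uses
the bounds on subsets \<open>S\<close>.\<close>

definition uniform_mds_approx :: "real \<Rightarrow> 'a graph \<Rightarrow> 'a set \<Rightarrow> bool" where
  "uniform_mds_approx \<alpha> G X \<longleftrightarrow> X \<subseteq> verts G \<and> dominates G X (verts G)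
     \<and> (\<forall>S. S \<subseteq> verts G \<longrightarrow> real (card (X \<inter> S)) \<le> \<alpha> * real (MDS G S))"

lemma uniform_mds_approx_neighbourhood_bound:
  assumes "uniform_mds_approx \<alpha> G X" "is_graph G" "0 \<le> \<alpha>"
    and "v \<in> verts G" "\<forall>u\<in>S. u = v \<or> adj G u v"
  shows "real (card (X \<inter> S)) \<le> \<alpha>"
proof -
  have S: "S \<subseteq> verts G" using assms(2,4,5) by (auto simp: is_graph_def)
  have "MDS G S \<le> 1"
    using assms(2,4,5) by (intro MDS_le_1_if_dominated_by_vertex) (auto simp: is_graph_def)
  then have "\<alpha> * real (MDS G S) \<le> \<alpha>"
    using \<open>0 \<le> \<alpha>\<close> mult_left_mono[of "real (MDS G S)" 1 \<alpha>] by simp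
  moreover have "real (card (X \<inter> S)) \<le> \<alpha> * real (MDS G S)"
    using S assms(1) by (simp add: uniform_mds_approx_def)
  ultimately show ?thesis by linarith
qed

text \<open>If the centre is missing, its pendant neighbours must all dominate themselves.\<close>

lemma uniform_mds_approx_contains_centre:
  assumes X: "uniform_mds_approx \<alpha> G X" and G: "is_graph G" and \<alpha>: "0 \<le> \<alpha>"
    and v: "v \<in> verts G" and L: "L \<subseteq> verts G" "\<forall>x\<in>L. \<forall>u. adj G x u \<longleftrightarrow> u = v"
    and many: "\<alpha> < real (card L)"
  shows "v \<in> X"
proof (rule ccontr)
  assume "v \<notin> X"
  have "L \<subseteq> X"
  proof
    fix x assume "x \<in> L"
    with X L(1) have "x \<in> X \<or> (\<exists>y\<in>X. adj G x y)"
      unfolding uniform_mds_approx_def dominates_def by blast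
    with \<open>x \<in> L\<close> L(2) \<open>v \<notin> X\<close> show "x \<in> X" by metis
  qed
  then have "X \<inter> L = L" by blast
  moreover have "real (card (X \<inter> L)) \<le> \<alpha>"
    using L(2) by (intro uniform_mds_approx_neighbourhood_bound[OF X G \<alpha> v]) blast
  ultimately show False using many by simp
qed

lemma is_cycle_adj_succ:
  assumes "is_cycle G cs" "k < length cs"
  shows "adj G (cs ! k) (cs ! (Suc k mod length cs))"
proof (cases "Suc k < length cs")
  case True
  then show ?thesis using assms(1) by (simp add: is_cycle_def)
next
  case False
  then have "length cs = Suc k" "cs \<noteq> []" using assms(2) by auto
  moreover have "adj G (last cs) (hd cs)" using assms(1) by (simp add: is_cycle_def)
  ultimately show ?thesis by (simp add: last_conv_nth hd_conv_nth)
qed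

lemma is_cycle_two_neighbours:
  assumes "is_cycle G cs" "x \<in> set cs"
  obtains y z where "y \<in> set cs" "z \<in> set cs" "y \<noteq> z" "y \<noteq> x" "z \<noteq> x"
    "adj G y x" "adj G x z"
proof -
  define l where "l = length cs"
  have l: "l \<ge> 3" and dist: "distinct cs" using assms(1) by (auto simp: is_cycle_def l_def)
  obtain k where k: "k < l" "cs ! k = x" using assms(2) by (auto simp: in_set_conv_nth l_def)
  define j where "j = (if k = 0 then l - 1 else k - 1)"
  have j: "j < l" "Suc j mod l = k" using k l by (auto simp: j_def)
  have "Suc k mod l < l" using l by simp
  moreover have "j \<noteq> Suc k mod l" "j \<noteq> k" "Suc k mod l \<noteq> k"
    using k l by (auto simp: j_def mod_Suc)
  ultimately show ?thesis
    using that[of "cs ! j" "cs ! (Suc k mod l)"] is_cycle_adj_succ[OF assms(1), of j]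
      is_cycle_adj_succ[OF assms(1), of k] j k dist
    by (auto simp: l_def nth_eq_iff_index_eq)
qed

definition parent_graph :: "nat \<Rightarrow> (nat \<Rightarrow> nat) \<Rightarrow> nat graph" where
  "parent_graph N p = ({..<N}, \<lambda>u v. u < N \<and> v < N \<and> ((0 < u \<and> p u = v) \<or> (0 < v \<and> p v = u)))"

lemma verts_parent_graph [simp]: "verts (parent_graph N p) = {..<N}"
  by (simp add: parent_graph_def verts_def)

lemma adj_parent_graph:
  "adj (parent_graph N p) u v \<longleftrightarrow> u < N \<and> v < N \<and> ((0 < u \<and> p u = v) \<or> (0 < v \<and> p v = u))"
  by (simp add: parent_graph_def adj_def)

locale parent_pointers =
  fixes N :: nat and p :: "nat \<Rightarrow> nat"
  assumes root: "0 < N" and parent_less: "\<And>x. 0 < x \<Longrightarrow> x < N \<Longrightarrow> p x < x"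
begin

abbreviation "T \<equiv> parent_graph N p"

lemma is_graph: "is_graph T"
proof -
  have "\<not> adj T v v" for v using parent_less[of v] by (auto simp: adj_parent_graph)
  then show ?thesis by (auto simp: is_graph_def adj_parent_graph)
qed

lemma reaches_root: "x < N \<Longrightarrow> (adj T)\<^sup>*\<^sup>* x 0"
proof (induction x rule: less_induct)
  case (less x)
  show ?case
  proof (cases "x = 0")
    case False
    then have "p x < x" using parent_less less.prems by simp
    then have "adj T x (p x)" using False less.prems by (simp add: adj_parent_graph)
    moreover have "(adj T)\<^sup>*\<^sup>* (p x) 0" using less \<open>p x < x\<close> by simp
    ultimately show ?thesis by (rule converse_rtranclp_into_rtranclp)
  qed simp
qed

lemma connected: "connected_graph T"
proof -
  have "symp (adj T)" by (auto simp: symp_def adj_parent_graph)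
  then have "(adj T)\<^sup>*\<^sup>* 0 y" if "y < N" for y
    using reaches_root[OF that] by (blast dest: sympD[OF symp_rtranclp])
  with reaches_root root show ?thesis
    by (auto simp: connected_graph_def intro: rtranclp_trans)
qed

lemma smaller_neighbour_is_parent: "adj T x y \<Longrightarrow> y < x \<Longrightarrow> y = p x"
  using parent_less[of y] by (auto simp: adj_parent_graph)

text \<open>On a cycle, the largest vertex has two distinct smaller neighbours, but only one parent.\<close>

lemma acyclic: "acyclic_graph T"
proof -
  have False if cycle: "is_cycle T cs" for cs
  proof -
    define x where "x = Max (set cs)"
    have "set cs \<noteq> {}" using cycle by (auto simp: is_cycle_def)
    then have "x \<in> set cs" and max: "\<And>y. y \<in> set cs \<Longrightarrow> y \<le> x" by (simp_all add: x_def)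
    obtain y z where yz: "y \<in> set cs" "z \<in> set cs" "y \<noteq> z" "y \<noteq> x" "z \<noteq> x"
      and "adj T y x" "adj T x z"
      using cycle \<open>x \<in> set cs\<close> by (rule is_cycle_two_neighbours)
    then have "adj T x y" by (auto simp: adj_parent_graph)
    moreover have "y < x" "z < x" using yz max by (simp_all add: order_less_le)
    ultimately have "y = p x" "z = p x"
      using \<open>adj T x z\<close> smaller_neighbour_is_parent by blast+
    with \<open>y \<noteq> z\<close> show False by simp
  qed
  then show ?thesis by (auto simp: acyclic_graph_def)
qed

lemma is_tree: "is_tree T"
  using is_graph connected acyclic by (simp add: is_tree_def)

end

text \<open>Breadth-first numbering: the children of \<open>x\<close> are \<open>n * x + 1, \<dots>, n * x + n\<close>.\<close>

definition nary_tree_depth2 :: "nat \<Rightarrow> nat graph" where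
  "nary_tree_depth2 n = parent_graph (n * n + n + 1) (\<lambda>x. (x - 1) div n)"

lemma parent_pointers_nary_tree_depth2: "0 < n \<Longrightarrow> parent_pointers (n * n + n + 1) (\<lambda>x. (x - 1) div n)"
  by unfold_locales (auto intro: le_less_trans[OF div_le_dividend])

lemma is_tree_nary_tree_depth2: "0 < n \<Longrightarrow> is_tree (nary_tree_depth2 n)"
  unfolding nary_tree_depth2_def
  by (rule parent_pointers.is_tree[OF parent_pointers_nary_tree_depth2])

lemma adj_nary_tree_depth2_root: "i \<in> {1..n} \<Longrightarrow> adj (nary_tree_depth2 n) i 0"
  by (auto simp: nary_tree_depth2_def adj_parent_graph)

lemma nary_tree_depth2_leaf_range:
  fixes n i x :: nat
  assumes "i \<in> {1..n}" "x \<in> {n * i + 1..n * i + n}"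
  shows "n < x" "x < n * n + n + 1"
proof -
  have "n \<le> n * i" "n * i \<le> n * n" using assms(1) by simp_all
  moreover have "n * i + 1 \<le> x" "x \<le> n * i + n" using assms(2) by simp_all
  ultimately show "n < x" "x < n * n + n + 1" by linarith+
qed

lemma adj_nary_tree_depth2_leaf:
  assumes "i \<in> {1..n}" "x \<in> {n * i + 1..n * i + n}"
  shows "adj (nary_tree_depth2 n) x u \<longleftrightarrow> u = i"
proof -
  note range = nary_tree_depth2_leaf_range[OF assms]
  have "(x - 1) div n = i"
    using assms by (auto intro!: div_nat_eqI simp: algebra_simps)
  moreover have "\<not> (0 < u \<and> (u - 1) div n = x \<and> u < n * n + n + 1)" for u
  proof
    assume u: "0 < u \<and> (u - 1) div n = x \<and> u < n * n + n + 1"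
    then have "n * x \<le> u - 1" by (metis div_times_less_eq_dividend mult.commute)
    moreover have "n * (n + 1) \<le> n * x" using range(1) by (intro mult_le_mono2) simp
    ultimately show False using u by (simp add: algebra_simps, arith)
  qed
  moreover have "i < n * n + n + 1" using assms by auto
  ultimately show ?thesis using assms range by (auto simp: nary_tree_depth2_def adj_parent_graph)
qed

theorem no_uniform_mds_approx_nary_tree_depth2:
  assumes \<alpha>: "0 \<le> \<alpha>" and n: "\<alpha> < real n"
  shows "\<not> uniform_mds_approx \<alpha> (nary_tree_depth2 n) X"
proof
  assume X: "uniform_mds_approx \<alpha> (nary_tree_depth2 n) X"
  have "0 < n" using \<alpha> n by linarith
  then have G: "is_graph (nary_tree_depth2 n)" using is_tree_nary_tree_depth2 by (simp add: is_tree_def)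
  have verts: "verts (nary_tree_depth2 n) = {..<n * n + n + 1}" by (simp add: nary_tree_depth2_def)
  have children: "{1..n} \<subseteq> X"
  proof
    fix i assume i: "i \<in> {1..n}"
    let ?L = "{n * i + 1..n * i + n}"
    have "i \<in> verts (nary_tree_depth2 n)" using i by (auto simp: verts)
    moreover have "?L \<subseteq> verts (nary_tree_depth2 n)"
      using nary_tree_depth2_leaf_range[OF i] by (auto simp: verts)
    moreover have "\<forall>x\<in>?L. \<forall>u. adj (nary_tree_depth2 n) x u \<longleftrightarrow> u = i"
      using adj_nary_tree_depth2_leaf[OF i] by blast
    moreover have "\<alpha> < real (card ?L)" using n by simp
    ultimately show "i \<in> X" by (rule uniform_mds_approx_contains_centre[OF X G \<alpha>])
  qed
  have "0 \<in> verts (nary_tree_depth2 n)" by (simp add: verts)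
  moreover have "\<forall>u\<in>{1..n}. u = 0 \<or> adj (nary_tree_depth2 n) u 0" using adj_nary_tree_depth2_root by blast
  ultimately have "real (card (X \<inter> {1..n})) \<le> \<alpha>"
    by (rule uniform_mds_approx_neighbourhood_bound[OF X G \<alpha>])
  moreover have "X \<inter> {1..n} = {1..n}" using children by blast
  ultimately show False using n by simp
qed

theorem mainTheorem14:
  fixes C :: "nat graph set" and \<alpha> :: real
  assumes "\<forall>G\<in>C. is_graph G"
    and "\<forall>T. is_tree T \<longrightarrow> T \<in> C"
    and "\<alpha> \<ge> 1"
  shows "\<not> (\<exists>A :: nat graph \<Rightarrow> nat set. \<forall>G\<in>C.
            A G \<subseteq> verts G \<and> dominates G (A G) (verts G)
          \<and> real (card (A G)) \<le> \<alpha> * real (MDS G (verts G))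
          \<and> (\<forall>S. S \<subseteq> verts G \<longrightarrow> real (card (A G \<inter> S)) \<le> \<alpha> * real (MDS G S)))"
proof -
  define n where "n = nat \<lceil>\<alpha>\<rceil> + 1"
  have "is_tree (nary_tree_depth2 n)" by (rule is_tree_nary_tree_depth2) (simp add: n_def)
  with assms(2) have "nary_tree_depth2 n \<in> C" by blast
  moreover have "\<alpha> < real n" unfolding n_def by linarith
  then have "\<not> uniform_mds_approx \<alpha> (nary_tree_depth2 n) X" for X
    using no_uniform_mds_approx_nary_tree_depth2 assms(3) by simp
  ultimately show ?thesis
    unfolding uniform_mds_approx_def by (auto intro!: bexI[where x = "nary_tree_depth2 n"])
qed

end
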